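(* (i) There exists a set $A \subseteq \mathbb{N}$ that contains arithmetic progressions of every finite length but is not fractionally dense. (ii) There exists a set $A \subseteq \mathbb{N}$ that is fractionally dense but contains no arithmetic progression of length $3$ or more.
   Context: $\mathbb{N} = \{1,2,3,\ldots\}$. For $A \subseteq \mathbb{N}$, the quotient set is $R(A) = \{a/a' : a, a' \in A\}$, and $A$ is called fractionally dense if the closure of $R(A)$ in $\mathbb{R}$ equals $[0,\infty)$. An arithmetic progression of length $n$ in $A$ is a sequence $c, c+d, c+2d, \ldots, c+(n-1)d$ of elements of $A$ with $d \geq 1$ an integer. *)

theory Defs
  imports "HOL-Analysis.Analysis"
begin

definition quotient_set :: "nat set \<Rightarrow> real set" where
  "quotient_set A = {real a / real a' | a a'. a \<in> A \<and> a' \<in> A}"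

definition fractionally_dense :: "nat set \<Rightarrow> bool" where
  "fractionally_dense A \<longleftrightarrow> closure (quotient_set A) = {0..}"

definition has_AP :: "nat set \<Rightarrow> nat \<Rightarrow> bool" where
  "has_AP A n \<longleftrightarrow> (\<exists>c d. d \<ge> 1 \<and> (\<forall>i<n. c + i * d \<in> A))"

end

theory Submission
  imports Defs
begin

text \<open>
(i) The union of the blocks \<open>[8^k, 2\<cdot>8^k]\<close> contains arbitrarily long runs of consecutive
integers, yet no quotient of two of its elements lies strictly between 2 and 4.

(ii) Enumerate all pairs \<open>(p\<^sub>n, q\<^sub>n)\<close> of positive integers with \<open>p\<^sub>n, q\<^sub>n \<le> n + 1\<close> and put
\<open>p\<^sub>n N\<^sub>n\<close> and \<open>q\<^sub>n N\<^sub>n\<close> into \<open>A\<close>, where \<open>2(n+1)N\<^sub>n < N\<^sub>n\<^sub>+\<^sub>1\<close>. Every positive rational is then a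
quotient. In a progression \<open>x < y < z\<close> the middle and last term must lie on the same scale
\<open>N\<^sub>k\<close>; then \<open>x = 2y - z\<close> is a positive multiple of \<open>N\<^sub>k\<close>, so it lies on that scale too,
which carries only two elements.
\<close>

lemma quotient_set_subset_nonneg: "quotient_set A \<subseteq> {0..}"
  by (auto simp: quotient_set_def)

lemma not_fractionally_dense_if_gap:
  assumes "0 \<le> a" "a < b" and gap: "quotient_set A \<inter> {a<..<b} = {}"
  shows "\<not> fractionally_dense A"
proof
  assume "fractionally_dense A"
  then have "{a<..<b} \<inter> {0..} = {}"
    using gap open_Int_closure_eq_empty[of "{a<..<b}" "quotient_set A"]
    by (simp add: fractionally_dense_def Int_commute)
  moreover have "(a + b) / 2 \<in> {a<..<b} \<inter> {0..}"
    using assms(1,2) by simp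
  ultimately show False
    by blast
qed

lemma fractionally_dense_if_positive_ratios:
  assumes ratios: "\<And>p q. 0 < p \<Longrightarrow> 0 < q \<Longrightarrow> real p / real q \<in> quotient_set A"
  shows "fractionally_dense A"
  unfolding fractionally_dense_def
proof (rule antisym)
  show "closure (quotient_set A) \<subseteq> {0..}"
    by (intro closure_minimal quotient_set_subset_nonneg closed_atLeast)
  show "{0..} \<subseteq> closure (quotient_set A)"
  proof (clarsimp simp: closure_approachable)
    fix x e :: real
    assume "0 \<le> x" "0 < e"
    then obtain r where "r \<in> \<rat>" "x < r" "r < x + e"
      using Rats_dense_in_real[of x "x + e"] by auto
    moreover obtain p q :: nat where "q \<noteq> 0" "\<bar>r\<bar> = real p / real q"
      using Rats_abs_nat_div_natE[OF \<open>r \<in> \<rat>\<close>] by metis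
    moreover have "0 < r"
      using \<open>0 \<le> x\<close> \<open>x < r\<close> by linarith
    ultimately have "r = real p / real q" "p \<noteq> 0"
      by (auto simp: zero_less_divide_iff)
    then have "r \<in> quotient_set A"
      using ratios[of p q] \<open>q \<noteq> 0\<close> by simp
    moreover have "dist r x < e"
      using \<open>x < r\<close> \<open>r < x + e\<close> by (simp add: dist_real_def)
    ultimately show "\<exists>y\<in>quotient_set A. dist y x < e"
      by blast
  qed
qed

lemma has_AP_three_terms:
  assumes "has_AP A n" "3 \<le> n"
  obtains c d where "0 < d" "c \<in> A" "c + d \<in> A" "c + 2 * d \<in> A"
proof -
  obtain c d where "1 \<le> d" and AP: "\<forall>i<n. c + i * d \<in> A"
    using assms(1) by (auto simp: has_AP_def)
  have "c + 0 * d \<in> A" "c + 1 * d \<in> A" "c + 2 * d \<in> A"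
    using AP[rule_format, of 0] AP[rule_format, of 1] AP[rule_format, of 2] assms(2) by auto
  then show thesis
    using that[of d c] \<open>1 \<le> d\<close> by simp
qed

definition octave_blocks :: "nat set" where
  "octave_blocks = {x. \<exists>k. 8 ^ k \<le> x \<and> x \<le> 2 * 8 ^ k}"

lemma octave_blocks_pos:
  assumes "x \<in> octave_blocks"
  shows "0 < x"
proof -
  obtain k where "8 ^ k \<le> x"
    using assms by (auto simp: octave_blocks_def)
  then show ?thesis
    by (rule less_le_trans[rotated]) simp
qed

lemma has_AP_octave_blocks: "has_AP octave_blocks n"
proof -
  have "n < 2 ^ n"
    by (rule less_exp)
  also have "(2::nat) ^ n \<le> 8 ^ n"
    by (rule power_mono) simp_all
  finally have "n \<le> 8 ^ n"
    by simp
  have "8 ^ n + i * 1 \<in> octave_blocks" if "i < n" for i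
  proof -
    have "i \<le> 8 ^ n"
      using \<open>i < n\<close> \<open>n \<le> 8 ^ n\<close> by linarith
    then show ?thesis
      unfolding octave_blocks_def by (intro CollectI exI[of _ n]) simp
  qed
  then have "\<forall>i<n. 8 ^ n + i * 1 \<in> octave_blocks"
    by blast
  then show ?thesis
    unfolding has_AP_def by blast
qed

lemma octave_blocks_ratio:
  assumes "a \<in> octave_blocks" "b \<in> octave_blocks"
  shows "a \<le> 2 * b \<or> 4 * b \<le> a"
proof -
  obtain j where j: "8 ^ j \<le> a" "a \<le> 2 * (8::nat) ^ j"
    using assms(1) by (auto simp: octave_blocks_def)
  obtain k where k: "8 ^ k \<le> b" "b \<le> 2 * (8::nat) ^ k"
    using assms(2) by (auto simp: octave_blocks_def)
  show ?thesis
  proof (cases "j \<le> k")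
    case True
    then have "(8::nat) ^ j \<le> 8 ^ k"
      by (simp add: power_increasing)
    then show ?thesis
      using j k by linarith
  next
    case False
    then have "(8::nat) ^ Suc k \<le> 8 ^ j"
      by (intro power_increasing) auto
    then show ?thesis
      using j k by simp
  qed
qed

lemma quotient_set_octave_blocks_gap: "quotient_set octave_blocks \<inter> {2<..<4} = {}"
proof -
  have "r \<le> 2 \<or> 4 \<le> r" if "r \<in> quotient_set octave_blocks" for r :: real
  proof -
    obtain a b where r: "r = real a / real b" and ab: "a \<in> octave_blocks" "b \<in> octave_blocks"
      using \<open>r \<in> quotient_set octave_blocks\<close> unfolding quotient_set_def by blast
    have "0 < real b"
      using octave_blocks_pos[OF ab(2)] by simp
    moreover have "real a \<le> 2 * real b \<or> 4 * real b \<le> real a"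
      using octave_blocks_ratio[OF ab] by linarith
    ultimately show ?thesis
      by (auto simp: r divide_le_eq le_divide_eq)
  qed
  then show ?thesis
    by force
qed

definition two_per_scale :: "(nat \<Rightarrow> nat) \<Rightarrow> (nat \<Rightarrow> nat) \<Rightarrow> (nat \<Rightarrow> nat) \<Rightarrow> nat set" where
  "two_per_scale N p q = range (\<lambda>n. p n * N n) \<union> range (\<lambda>n. q n * N n)"

definition fast_scales :: "(nat \<Rightarrow> nat) \<Rightarrow> bool" where
  "fast_scales N \<longleftrightarrow> 0 < N 0 \<and> (\<forall>n. 2 * (n + 1) * N n < N (Suc n))"

lemma fast_scales_pos:
  assumes "fast_scales N"
  shows "0 < N n"
proof (cases n)
  case (Suc m)
  have "2 * (m + 1) * N m < N (Suc m)"
    using assms by (simp add: fast_scales_def)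
  then show ?thesis
    using Suc by simp
qed (use assms in \<open>simp add: fast_scales_def\<close>)

lemma fast_scales_mono:
  assumes "fast_scales N" "m \<le> n"
  shows "N m \<le> N n"
proof (rule lift_Suc_mono_le[OF _ assms(2)])
  fix k
  have "N k \<le> 2 * (k + 1) * N k"
    by simp
  also have "\<dots> \<le> N (Suc k)"
    using assms(1) by (simp add: fast_scales_def less_imp_le)
  finally show "N k \<le> N (Suc k)" .
qed

lemma fast_scales_gap:
  assumes "fast_scales N" "m < n" "u \<le> (m + 1) * N m"
  shows "2 * u < N n"
proof -
  have "2 * u \<le> 2 * (m + 1) * N m"
    using assms(3) by simp
  also have "\<dots> < N (Suc m)"
    using assms(1) by (simp add: fast_scales_def)
  also have "\<dots> \<le> N n"
    using fast_scales_mono assms(1,2) by simp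
  finally show ?thesis .
qed

lemma two_per_scale_memE:
  assumes "x \<in> two_per_scale N p q"
    and "\<And>n. p n \<in> {1..n + 1}" "\<And>n. q n \<in> {1..n + 1}"
  obtains n a where "x = a * N n" "a \<in> {1..n + 1}" "x \<in> {p n * N n, q n * N n}"
proof -
  obtain n where "x \<in> {p n * N n, q n * N n}"
    using assms(1) unfolding two_per_scale_def by blast
  moreover then obtain a where "x = a * N n" "a \<in> {p n, q n}"
    by blast
  ultimately show thesis
    using that[of a n] assms(2,3)[of n] by blast
qed

lemma two_per_scale_no_three_term_AP:
  assumes "fast_scales N" and p: "\<And>n. p n \<in> {1..n + 1}" and q: "\<And>n. q n \<in> {1..n + 1}"
    and "x \<in> two_per_scale N p q" "y \<in> two_per_scale N p q" "z \<in> two_per_scale N p q"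
    and "x < y" "y < z" and mid: "x + z = 2 * y"
  shows False
proof -
  obtain i a where x: "x = a * N i" "a \<in> {1..i + 1}" "x \<in> {p i * N i, q i * N i}"
    using two_per_scale_memE[OF assms(4) p q] .
  obtain j b where y: "y = b * N j" "b \<in> {1..j + 1}" "y \<in> {p j * N j, q j * N j}"
    using two_per_scale_memE[OF assms(5) p q] .
  obtain k c where z: "z = c * N k" "c \<in> {1..k + 1}" "z \<in> {p k * N k, q k * N k}"
    using two_per_scale_memE[OF assms(6) p q] .
  have lower: "N i \<le> x" "N j \<le> y" "N k \<le> z"
    using x y z by simp_all
  have upper: "x \<le> (i + 1) * N i" "y \<le> (j + 1) * N j" "z \<le> (k + 1) * N k"
    unfolding x(1) y(1) z(1) using x(2) y(2) z(2) by (simp_all only: atLeastAtMost_iff mult_right_mono)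
  have gap: "m < n \<Longrightarrow> u \<le> (m + 1) * N m \<Longrightarrow> 2 * u < N n" for m n u
    using fast_scales_gap[OF \<open>fast_scales N\<close>] .
  consider "j < k" | "k < j" | "j = k" "k < i" | "j = k" "i < k" | "i = k" "j = k"
    by linarith
  then show False
  proof cases
    case 1
    then show False
      using gap[OF 1 upper(2)] lower(3) mid by linarith
  next
    case 2
    then show False
      using gap[OF 2 upper(3)] lower(2) \<open>y < z\<close> by linarith
  next
    case 3
    then show False
      using gap[OF 3(2) upper(3)] lower(1) \<open>x < y\<close> \<open>y < z\<close> by linarith
  next
    case 4
    have "x = (2 * b - c) * N k"
      using mid y(1) z(1) 4(1) by (simp add: diff_mult_distrib)
    then have "N k dvd x"
      by simp
    moreover have "0 < x"
      using lower(1) fast_scales_pos[OF \<open>fast_scales N\<close>, of i] by linarith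
    ultimately have "N k \<le> x"
      by (rule dvd_imp_le)
    then show False
      using gap[OF 4(2) upper(1)] by linarith
  next
    case 5
    then show False
      using x(3) y(3) z(3) \<open>x < y\<close> \<open>y < z\<close> unfolding 5 by auto
  qed
qed

lemma two_mul_Suc_less_four_power: "2 * (n + 1) < (4::nat) ^ (2 * n + 1)"
proof (induction n)
  case (Suc n)
  have "2 * (Suc n + 1) \<le> 16 * (2 * (n + 1))"
    by simp
  also have "\<dots> < 16 * 4 ^ (2 * n + 1)"
    using Suc by simp
  also have "\<dots> = (4::nat) ^ (2 * Suc n + 1)"
    by (simp add: power_add)
  finally show ?case .
qed simp

lemma fast_scales_four_power_square: "fast_scales (\<lambda>n. 4 ^ (n * n))"
proof -
  have "2 * (n + 1) * 4 ^ (n * n) < (4::nat) ^ (Suc n * Suc n)" for n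
  proof -
    have "2 * (n + 1) * 4 ^ (n * n) < 4 ^ (2 * n + 1) * (4::nat) ^ (n * n)"
      using two_mul_Suc_less_four_power[of n] by (rule mult_strict_right_mono) simp
    also have "\<dots> = 4 ^ (Suc n * Suc n)"
      by (simp add: power_add[symmetric] algebra_simps)
    finally show ?thesis .
  qed
  then show ?thesis
    by (simp add: fast_scales_def)
qed

lemma prod_decode_le: "fst (prod_decode n) \<le> n" "snd (prod_decode n) \<le> n"
  using le_prod_encode_1[of "fst (prod_decode n)" "snd (prod_decode n)"]
    le_prod_encode_2[of "snd (prod_decode n)" "fst (prod_decode n)"]
  by simp_all

definition rational_scales :: "nat set" where
  "rational_scales =
     two_per_scale (\<lambda>n. 4 ^ (n * n)) (\<lambda>n. fst (prod_decode n) + 1) (\<lambda>n. snd (prod_decode n) + 1)"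

lemma rational_scales_pos: "x \<in> rational_scales \<Longrightarrow> 0 < x"
  by (auto simp: rational_scales_def two_per_scale_def)

lemma fractionally_dense_rational_scales: "fractionally_dense rational_scales"
proof (rule fractionally_dense_if_positive_ratios)
  fix p q :: nat
  assume "0 < p" "0 < q"
  define n where "n = prod_encode (p - 1, q - 1)"
  have decode: "fst (prod_decode n) + 1 = p" "snd (prod_decode n) + 1 = q"
    using \<open>0 < p\<close> \<open>0 < q\<close> by (simp_all add: n_def)
  have "(fst (prod_decode n) + 1) * 4 ^ (n * n) \<in> rational_scales"
    "(snd (prod_decode n) + 1) * 4 ^ (n * n) \<in> rational_scales"
    unfolding rational_scales_def two_per_scale_def by blast+
  then have "p * 4 ^ (n * n) \<in> rational_scales" "q * 4 ^ (n * n) \<in> rational_scales"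
    unfolding decode .
  moreover have "real p / real q = real (p * 4 ^ (n * n)) / real (q * 4 ^ (n * n))"
    by simp
  ultimately show "real p / real q \<in> quotient_set rational_scales"
    unfolding quotient_set_def by blast
qed

lemma rational_scales_no_three_term_AP:
  assumes "3 \<le> n"
  shows "\<not> has_AP rational_scales n"
proof
  assume "has_AP rational_scales n"
  then obtain c d where "0 < d" "c \<in> rational_scales" "c + d \<in> rational_scales"
      "c + 2 * d \<in> rational_scales"
    using has_AP_three_terms assms by blast
  moreover have "fst (prod_decode m) + 1 \<in> {1..m + 1}" "snd (prod_decode m) + 1 \<in> {1..m + 1}" for m
    using prod_decode_le[of m] by simp_all
  ultimately show False
    using two_per_scale_no_three_term_AP[OF fast_scales_four_power_square, of
        "\<lambda>m. fst (prod_decode m) + 1" "\<lambda>m. snd (prod_decode m) + 1" c "c + d" "c + 2 * d"]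
    unfolding rational_scales_def by simp
qed

theorem mainTheorem4:
  shows "(\<exists>A :: nat set. 0 \<notin> A \<and> (\<forall>n. has_AP A n) \<and> \<not> fractionally_dense A)
       \<and> (\<exists>A :: nat set. 0 \<notin> A \<and> fractionally_dense A \<and> (\<forall>n\<ge>3. \<not> has_AP A n))"
proof (intro conjI)
  have "\<not> fractionally_dense octave_blocks"
    by (rule not_fractionally_dense_if_gap[OF _ _ quotient_set_octave_blocks_gap]) simp_all
  then show "\<exists>A. 0 \<notin> A \<and> (\<forall>n. has_AP A n) \<and> \<not> fractionally_dense A"
    using octave_blocks_pos has_AP_octave_blocks by blast
  show "\<exists>A. 0 \<notin> A \<and> fractionally_dense A \<and> (\<forall>n\<ge>3. \<not> has_AP A n)"
    using rational_scales_pos fractionally_dense_rational_scales rational_scales_no_three_term_AP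
    by blast
qed

end
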